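(* Let $W_T=S_{N+1}$ be the symmetric group with simple reflections $s_1,\dots,s_N$ indexed by $T=\{1<2<\dots<N\}$, let $I=\{1,\dots,N-1\}$, $J=\{2,\dots,N\}$, and for $X\subset T$ with $X=\{x_1>x_2>\dots>x_d\}$ let $h_X=s_{x_1}s_{x_2}\cdots s_{x_d}$. For any subset $X\subset T$ the following are equivalent: (i) $J\subset X$; (ii) $J\subset\mathcal R(w_Ih_X)$. Moreover, in this case: (1) $\ell(w_Ih_X)=\ell(w_I)+\ell(h_X)$; (2) $w_Ih_X=h_Yw_J$ for some uniquely determined $Y\subset T$; (3) $Y$ is the conjugation of $X$ by the longest element of $W_T$; (4) $\mathcal R(w_Ih_X)=X$; (5) $\mathcal L(h_Yw_J)=Y$.
   Context: For $K\subset T$, $w_K$ is the longest element of the parabolic subgroup $W_K$. $\mathcal L(w)$ and $\mathcal R(w)$ denote the left and right descent sets of $w$ (sets of simple reflections, identified with their indices). Conjugation by the longest element $w_T$ sends $s_i$ to $s_{N+1-i}$. *)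

theory Defs
  imports "HOL-Combinatorics.Transposition"
begin

text \<open>Elements of the symmetric group S_(N+1) are modelled as permutations
  of the naturals acting on {1..N+1} (fixing everything else).  The product
  u v of group elements is function composition u \<circ> v.\<close>

definition sref :: "nat \<Rightarrow> nat \<Rightarrow> nat" where
  "sref i = transpose i (Suc i)"

definition word_prod :: "nat list \<Rightarrow> nat \<Rightarrow> nat" where
  "word_prod ws = foldr (\<lambda>i acc. sref i \<circ> acc) ws id"

definition parab :: "nat set \<Rightarrow> (nat \<Rightarrow> nat) set" where
  "parab K = {word_prod ws | ws. set ws \<subseteq> K}"

definition len :: "nat \<Rightarrow> (nat \<Rightarrow> nat) \<Rightarrow> nat" where
  "len N w = (LEAST k. \<exists>ws. set ws \<subseteq> {1..N} \<and> length ws = k \<and> word_prod ws = w)"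

definition rdes :: "nat \<Rightarrow> (nat \<Rightarrow> nat) \<Rightarrow> nat set" where
  "rdes N w = {i \<in> {1..N}. len N (w \<circ> sref i) < len N w}"

definition ldes :: "nat \<Rightarrow> (nat \<Rightarrow> nat) \<Rightarrow> nat set" where
  "ldes N w = {i \<in> {1..N}. len N (sref i \<circ> w) < len N w}"

definition longest :: "nat \<Rightarrow> nat set \<Rightarrow> nat \<Rightarrow> nat" where
  "longest N K = (SOME w. w \<in> parab K \<and> (\<forall>v \<in> parab K. len N v \<le> len N w))"

definition hprod :: "nat set \<Rightarrow> nat \<Rightarrow> nat" where
  "hprod X = word_prod (rev (sorted_list_of_set X))"

definition conj_longest :: "nat \<Rightarrow> nat set \<Rightarrow> nat set" where
  "conj_longest N X = {j \<in> {1..N}. \<exists>x \<in> X.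
      sref j = longest N {1..N} \<circ> sref x \<circ> inv (longest N {1..N})}"

end

theory Submission
  imports Defs "HOL-Combinatorics.Permutations"
begin

text \<open>If \<open>J \<subseteq> X \<subseteq> T\<close> then \<open>X = T\<close> or \<open>X = J\<close>, so the forward direction concerns
  just two explicit permutations of \<open>{1..N+1}\<close>: \<open>w\<^sub>I\<close> and \<open>w\<^sub>J\<close> are the reversals of
  \<open>{1..N}\<close> and \<open>{2..N+1}\<close>, and \<open>h\<^bsub>{a..N}\<^esub> = s\<^sub>N \<cdots> s\<^sub>a\<close> is the cycle
  \<open>a \<mapsto> N+1 \<mapsto> N \<mapsto> \<cdots> \<mapsto> a\<close>; the identity \<open>w\<^sub>I h\<^sub>X = h\<^sub>Y w\<^sub>J\<close> and all descent sets
  are then checked pointwise.  This rests on the dictionary between Coxeter data and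
  one-line notation: the length is the number of inversions (each \<open>s\<^sub>i\<close> changes it by one,
  and removing descents sorts any permutation), \<open>i\<close> is a right descent of \<open>w\<close> iff
  \<open>w (i+1) < w i\<close>, left descents of \<open>w\<close> are right descents of \<open>w\<^sup>-\<^sup>1\<close>, and the longest
  element of \<open>W\<^bsub>{a..b}\<^esub>\<close> is the reversal of \<open>{a..b+1}\<close>, the only permutation of that
  interval inverting every pair.  Conversely, if \<open>j\<close> is the largest element of \<open>J\<close>
  missing from \<open>X\<close>, then \<open>w\<^sub>I h\<^sub>X\<close> sends \<open>j+1\<close> to \<open>N+1\<close> and \<open>j\<close> below it, so \<open>j\<close> is not a
  right descent.\<close>

lemma sref_apply: "sref i x = (if x = i then Suc i else if x = Suc i then i else x)"
  by (simp add: sref_def transpose_def)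

lemma sref_sref [simp]: "sref i \<circ> sref i = id"
  by (simp add: sref_def)

lemma sref_sref_apply [simp]: "sref i (sref i x) = x"
  by (simp add: sref_apply)

lemma inj_sref: "inj (sref i)"
  by (rule inj_on_inverseI[of _ "sref i"]) simp

lemma sref_eq_iff [simp]: "sref i = sref j \<longleftrightarrow> i = j"
  by (auto dest: fun_cong[of _ _ i] simp: sref_apply split: if_splits)

lemma sref_permutes: "a \<le> i \<Longrightarrow> i < b \<Longrightarrow> sref i permutes {a..b}"
  unfolding sref_def by (rule permutes_swap_id) auto

lemma word_prod_Nil [simp]: "word_prod [] = id"
  by (simp add: word_prod_def)

lemma word_prod_Cons [simp]: "word_prod (i # ws) = sref i \<circ> word_prod ws"
  by (simp add: word_prod_def)

lemma word_prod_append: "word_prod (xs @ ys) = word_prod xs \<circ> word_prod ys"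
  by (induction xs) (auto simp: comp_assoc)

lemma word_prod_snoc: "word_prod (ws @ [i]) = word_prod ws \<circ> sref i"
  by (simp add: word_prod_append)

lemma word_prod_permutes: "set ws \<subseteq> {a..b} \<Longrightarrow> word_prod ws permutes {a..Suc b}"
proof (induction ws)
  case (Cons i ws)
  then have "sref i permutes {a..Suc b}" "word_prod ws permutes {a..Suc b}"
    by (auto intro: sref_permutes)
  then show ?case
    unfolding word_prod_Cons using permutes_compose by blast
qed simp

lemma word_prod_rev_comp: "word_prod (rev ws) \<circ> word_prod ws = id"
  by (induction ws) (simp_all add: word_prod_snoc comp_assoc)

lemma inv_word_prod: "inv (word_prod ws) = word_prod (rev ws)"
  using word_prod_rev_comp[of ws] word_prod_rev_comp[of "rev ws"]
  by (intro inv_unique_comp) simp_all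

lemma word_prod_in_parab: "set ws \<subseteq> K \<Longrightarrow> word_prod ws \<in> parab K"
  unfolding parab_def by blast

lemma parab_mono: "K \<subseteq> L \<Longrightarrow> parab K \<subseteq> parab L"
  unfolding parab_def by blast

lemma sref_in_parab: "i \<in> K \<Longrightarrow> sref i \<in> parab K"
  using word_prod_in_parab[of "[i]"] by simp

lemma parab_comp: "u \<in> parab K \<Longrightarrow> v \<in> parab K \<Longrightarrow> u \<circ> v \<in> parab K"
  unfolding parab_def by (auto simp flip: word_prod_append) (metis Un_subset_iff set_append)

lemma parab_inv: "w \<in> parab K \<Longrightarrow> inv w \<in> parab K"
  unfolding parab_def by (auto simp: inv_word_prod) (metis set_rev)

lemma parab_permutes: "w \<in> parab {a..b} \<Longrightarrow> w permutes {a..Suc b}"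
  unfolding parab_def using word_prod_permutes by blast

lemma bij_word_prod: "bij (word_prod ws)"
  using word_prod_rev_comp[of ws] word_prod_rev_comp[of "rev ws"] by (intro o_bij) simp_all

section \<open>Length as the number of inversions\<close>

definition inversions :: "nat \<Rightarrow> (nat \<Rightarrow> nat) \<Rightarrow> (nat \<times> nat) set" where
  "inversions N w = {(i, j). i < j \<and> j \<le> Suc N \<and> w j < w i}"

definition ninversions :: "nat \<Rightarrow> (nat \<Rightarrow> nat) \<Rightarrow> nat" where
  "ninversions N w = card (inversions N w)"

lemma finite_inversions [simp]: "finite (inversions N w)"
  by (rule finite_subset[of _ "{..Suc N} \<times> {..Suc N}"]) (auto simp: inversions_def)

lemma ninversions_id [simp]: "ninversions N id = 0"
proof -
  have "inversions N id = {}"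
    by (auto simp: inversions_def)
  then show ?thesis
    by (simp add: ninversions_def)
qed

lemma card_inversions_comp_sref_minus:
  assumes "i \<le> N"
  shows "card (inversions N (w \<circ> sref i) - {(i, Suc i)}) = card (inversions N w - {(i, Suc i)})"
proof -
  let ?swap = "map_prod (sref i) (sref i)"
  have "card (inversions N u - {(i, Suc i)}) \<le> card (inversions N (u \<circ> sref i) - {(i, Suc i)})"
    for u
  proof -
    have "inj ?swap"
      by (simp add: prod.inj_map inj_sref)
    then have "card (inversions N u - {(i, Suc i)}) = card (?swap ` (inversions N u - {(i, Suc i)}))"
      by (simp add: card_image inj_on_subset)
    also have "\<dots> \<le> card (inversions N (u \<circ> sref i) - {(i, Suc i)})"
      using assms by (intro card_mono) (simp, auto simp: inversions_def sref_apply split: if_splits)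
    finally show ?thesis .
  qed
  from this[of w] this[of "w \<circ> sref i"] show ?thesis
    by (simp add: comp_assoc)
qed

lemma ninversions_comp_sref_ascent:
  assumes "i \<le> N" "w i < w (Suc i)"
  shows "ninversions N (w \<circ> sref i) = Suc (ninversions N w)"
proof -
  have "(i, Suc i) \<in> inversions N (w \<circ> sref i)" "(i, Suc i) \<notin> inversions N w"
    using assms by (simp_all add: inversions_def sref_apply)
  then show ?thesis
    using card_inversions_comp_sref_minus[OF assms(1), of w] unfolding ninversions_def
    by (metis card_Suc_Diff1 Diff_empty Diff_insert0 finite_inversions)
qed

lemma ninversions_comp_sref_descent:
  assumes "i \<le> N" "w (Suc i) < w i"
  shows "Suc (ninversions N (w \<circ> sref i)) = ninversions N w"
  using ninversions_comp_sref_ascent[OF assms(1), of "w \<circ> sref i"] assms(2)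
  by (simp add: comp_assoc sref_apply)

lemma ninversions_word_prod_le:
  "set ws \<subseteq> {1..N} \<Longrightarrow> ninversions N (word_prod ws) \<le> length ws"
proof (induction ws rule: rev_induct)
  case (snoc i ws)
  let ?w = "word_prod ws"
  have "?w i \<noteq> ?w (Suc i)"
    using bij_word_prod[THEN bij_is_inj] by (metis injD n_not_Suc_n)
  then have "ninversions N (word_prod (ws @ [i])) \<le> Suc (ninversions N ?w)"
    using snoc.prems ninversions_comp_sref_ascent[of i N ?w] ninversions_comp_sref_descent[of i N ?w]
    by (cases "?w i < ?w (Suc i)") (auto simp: word_prod_snoc)
  then show ?case
    using snoc by simp
qed simp

lemma ascents_add_diff_le:
  assumes "\<And>i. k \<le> i \<Longrightarrow> i < m \<Longrightarrow> w i < w (Suc i)" "k \<le> m"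
  shows "w k + (m - k) \<le> w m"
  using assms(2,1)
proof (induction m rule: dec_induct)
  case (step m)
  have "w k + (m - k) \<le> w m"
    using step.IH step.prems step.hyps(2) by simp
  moreover have "w m < w (Suc m)"
    using step.prems step.hyps(1) by simp
  ultimately show ?case
    using step.hyps(1) by linarith
qed simp

lemma ascending_permutes_interval_eq_id:
  assumes "w permutes {a..c}" "\<And>i. a \<le> i \<Longrightarrow> i < c \<Longrightarrow> w i < w (Suc i)"
  shows "w = id"
proof
  fix k
  show "w k = id k"
  proof (cases "k \<in> {a..c}")
    case True
    then have "w a \<in> {a..c}" "w c \<in> {a..c}"
      unfolding permutes_in_image[OF assms(1)] by auto
    moreover have "w a + (k - a) \<le> w k" "w k + (c - k) \<le> w c"
      using True by (intro ascents_add_diff_le assms(2); simp)+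
    ultimately show ?thesis
      using True by simp
  next
    case False
    then show ?thesis
      using permutes_not_in[OF assms(1)] by simp
  qed
qed

lemma permutes_atLeastAtMost_word_prod:
  assumes "b \<le> N" "w permutes {a..Suc b}"
  shows "\<exists>ws. set ws \<subseteq> {a..b} \<and> length ws = ninversions N w \<and> word_prod ws = w"
  using assms(2)
proof (induction "ninversions N w" arbitrary: w rule: less_induct)
  case less
  show ?case
  proof (cases "\<exists>i \<in> {a..b}. w (Suc i) < w i")
    case True
    then obtain i where i: "a \<le> i" "i \<le> b" "w (Suc i) < w i"
      by auto
    then have descent: "Suc (ninversions N (w \<circ> sref i)) = ninversions N w"
      using assms(1) by (intro ninversions_comp_sref_descent) auto
    have "w \<circ> sref i permutes {a..Suc b}"
      using i less.prems by (intro permutes_compose sref_permutes) auto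
    then obtain ws where "set ws \<subseteq> {a..b}" "length ws = ninversions N (w \<circ> sref i)"
        "word_prod ws = w \<circ> sref i"
      using less.hyps descent by (metis lessI)
    then show ?thesis
      using i descent by (intro exI[of _ "ws @ [i]"]) (auto simp: word_prod_snoc comp_assoc)
  next
    case False
    have "w i < w (Suc i)" if "a \<le> i" "i < Suc b" for i
    proof -
      have "w i \<noteq> w (Suc i)"
        using permutes_inj[OF less.prems] by (metis injD n_not_Suc_n)
      moreover have "\<not> w (Suc i) < w i"
        using False that by auto
      ultimately show ?thesis
        by simp
    qed
    then have "w = id"
      using less.prems by (rule ascending_permutes_interval_eq_id[rotated])
    then show ?thesis
      by (intro exI[of _ "[]"]) simp
  qed
qed

lemma len_eq_ninversions:
  assumes "w \<in> parab {1..N}"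
  shows "len N w = ninversions N w"
  unfolding len_def
proof (rule Least_equality)
  show "\<exists>ws. set ws \<subseteq> {1..N} \<and> length ws = ninversions N w \<and> word_prod ws = w"
    using permutes_atLeastAtMost_word_prod[OF order_refl parab_permutes[OF assms]] .
next
  fix k
  assume "\<exists>ws. set ws \<subseteq> {1..N} \<and> length ws = k \<and> word_prod ws = w"
  then show "ninversions N w \<le> k"
    using ninversions_word_prod_le by blast
qed

lemma inv_sref [simp]: "inv (sref i) = sref i"
  by (rule inv_unique_comp) simp_all

lemma bij_of_parab: "w \<in> parab K \<Longrightarrow> bij w"
  unfolding parab_def using bij_word_prod by blast

lemma len_inv_le:
  assumes "w \<in> parab {1..N}"
  shows "len N (inv w) \<le> len N w"
proof -
  obtain ws where ws: "set ws \<subseteq> {1..N}" "length ws = ninversions N w" "word_prod ws = w"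
    using permutes_atLeastAtMost_word_prod[OF order_refl parab_permutes[OF assms]] by blast
  have "len N (inv w) = ninversions N (word_prod (rev ws))"
    using len_eq_ninversions[OF parab_inv[OF assms]] by (simp add: inv_word_prod flip: ws(3))
  also have "\<dots> \<le> length (rev ws)"
    using ws(1) by (intro ninversions_word_prod_le) simp
  also have "\<dots> = len N w"
    using ws(2) len_eq_ninversions[OF assms] by simp
  finally show ?thesis .
qed

lemma len_inv:
  assumes "w \<in> parab {1..N}"
  shows "len N (inv w) = len N w"
  using len_inv_le[OF assms] len_inv_le[OF parab_inv[OF assms]] inv_inv_eq[OF bij_of_parab[OF assms]]
  by simp

lemma rdes_eq:
  assumes "w \<in> parab {1..N}"
  shows "rdes N w = {i \<in> {1..N}. w (Suc i) < w i}"
proof -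
  have "len N (w \<circ> sref i) < len N w \<longleftrightarrow> w (Suc i) < w i" if i: "i \<in> {1..N}" for i
  proof -
    have "w \<circ> sref i \<in> parab {1..N}"
      using assms i by (intro parab_comp sref_in_parab)
    then have "len N (w \<circ> sref i) = ninversions N (w \<circ> sref i)" "len N w = ninversions N w"
      using assms by (simp_all add: len_eq_ninversions)
    moreover have "w i \<noteq> w (Suc i)"
      using bij_of_parab[OF assms] by (metis bij_is_inj injD n_not_Suc_n)
    ultimately show ?thesis
      using ninversions_comp_sref_ascent[of i N w] ninversions_comp_sref_descent[of i N w] i
      by (cases "w i < w (Suc i)") auto
  qed
  then show ?thesis
    unfolding rdes_def by blast
qed

lemma ldes_eq_rdes_inv:
  assumes "w \<in> parab {1..N}"
  shows "ldes N w = rdes N (inv w)"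
proof -
  have "len N (sref i \<circ> w) = len N (inv w \<circ> sref i)" if "i \<in> {1..N}" for i
  proof -
    have "sref i \<circ> w \<in> parab {1..N}"
      using assms that by (intro parab_comp sref_in_parab)
    then have "len N (sref i \<circ> w) = len N (inv (sref i \<circ> w))"
      by (simp add: len_inv)
    also have "inv (sref i \<circ> w) = inv w \<circ> sref i"
      using bij_of_parab[OF assms] bij_of_parab[OF sref_in_parab[OF that]] by (simp add: o_inv_distrib)
    finally show ?thesis .
  qed
  then show ?thesis
    unfolding ldes_def rdes_def using len_inv[OF assms] by auto
qed

section \<open>Longest elements of parabolic subgroups\<close>

definition reversal :: "nat \<Rightarrow> nat \<Rightarrow> nat \<Rightarrow> nat" where
  "reversal a c k = (if a \<le> k \<and> k \<le> c then a + c - k else k)"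

lemma reversal_reversal [simp]: "reversal a c (reversal a c k) = k"
  by (auto simp: reversal_def)

lemma reversal_comp_reversal [simp]: "reversal a c \<circ> reversal a c = id"
  by auto

lemma inv_reversal [simp]: "inv (reversal a c) = reversal a c"
  by (rule inv_unique_comp) simp_all

lemma reversal_permutes: "reversal a c permutes {a..c}"
  by (rule inj_imp_permutes) (auto simp: reversal_def inj_on_def)

definition ordered_pairs :: "nat \<Rightarrow> nat \<Rightarrow> (nat \<times> nat) set" where
  "ordered_pairs a c = {(i, j). a \<le> i \<and> i < j \<and> j \<le> c}"

lemma finite_ordered_pairs [simp]: "finite (ordered_pairs a c)"
  by (rule finite_subset[of _ "{..c} \<times> {..c}"]) (auto simp: ordered_pairs_def)

lemma inversions_subset_ordered_pairs:
  assumes "w permutes {a..c}"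
  shows "inversions N w \<subseteq> ordered_pairs a c"
proof clarify
  fix i j
  assume "(i, j) \<in> inversions N w"
  then have ij: "i < j" "w j < w i"
    by (auto simp: inversions_def)
  have "w i \<in> {a..c} \<longleftrightarrow> i \<in> {a..c}" "w j \<in> {a..c} \<longleftrightarrow> j \<in> {a..c}"
    by (rule permutes_in_image[OF assms])+
  moreover have "i \<notin> {a..c} \<Longrightarrow> w i = i" "j \<notin> {a..c} \<Longrightarrow> w j = j"
    by (simp_all add: permutes_not_in[OF assms])
  ultimately show "(i, j) \<in> ordered_pairs a c"
    using ij unfolding ordered_pairs_def by (cases "i < a"; cases "c < j") auto
qed

lemma inversions_reversal:
  assumes "c \<le> Suc N"
  shows "inversions N (reversal a c) = ordered_pairs a c"
proof
  show "inversions N (reversal a c) \<subseteq> ordered_pairs a c"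
    using inversions_subset_ordered_pairs[OF reversal_permutes] .
  show "ordered_pairs a c \<subseteq> inversions N (reversal a c)"
    using assms by (auto simp: ordered_pairs_def inversions_def reversal_def)
qed

lemma descending_permutes_interval_eq_reversal:
  assumes "w permutes {a..c}" "\<And>i. a \<le> i \<Longrightarrow> i < c \<Longrightarrow> w (Suc i) < w i"
  shows "w = reversal a c"
proof -
  have "w \<circ> reversal a c permutes {a..c}"
    using assms(1) reversal_permutes by (rule permutes_compose[rotated])
  moreover have "(w \<circ> reversal a c) i < (w \<circ> reversal a c) (Suc i)" if "a \<le> i" "i < c" for i
  proof -
    have "reversal a c i = Suc (reversal a c (Suc i))" "a \<le> reversal a c (Suc i)"
        "reversal a c (Suc i) < c"
      using that by (auto simp: reversal_def)
    then show ?thesis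
      using assms(2) by simp
  qed
  ultimately have "w \<circ> reversal a c = id"
    by (rule ascending_permutes_interval_eq_id)
  then show ?thesis
    by (metis comp_id comp_assoc reversal_comp_reversal)
qed

lemma reversal_in_parab: "reversal a (Suc b) \<in> parab {a..b}"
  using permutes_atLeastAtMost_word_prod[OF order_refl reversal_permutes] by (metis word_prod_in_parab)

lemma longest_eq_reversal:
  assumes "1 \<le> a" "b \<le> N"
  shows "longest N {a..b} = reversal a (Suc b)"
proof -
  let ?r = "reversal a (Suc b)"
  have parab_T: "v \<in> parab {1..N}" if "v \<in> parab {a..b}" for v
    using that parab_mono[of "{a..b}" "{1..N}"] assms by auto
  have len_parab: "len N v = card (inversions N v)" if "v \<in> parab {a..b}" for v
    using len_eq_ninversions[OF parab_T[OF that]] by (simp add: ninversions_def)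
  have r: "?r \<in> parab {a..b}"
    by (rule reversal_in_parab)
  have len_r: "len N ?r = card (ordered_pairs a (Suc b))"
    using len_parab[OF r] inversions_reversal[of "Suc b" N a] assms(2) by simp
  have len_le: "len N v \<le> card (ordered_pairs a (Suc b))" if "v \<in> parab {a..b}" for v
    using len_parab[OF that] inversions_subset_ordered_pairs[OF parab_permutes[OF that]]
    by (simp add: card_mono)
  show ?thesis
    unfolding longest_def
  proof (rule some_equality)
    show "?r \<in> parab {a..b} \<and> (\<forall>v \<in> parab {a..b}. len N v \<le> len N ?r)"
      using r len_le len_r by simp
  next
    fix w
    assume w: "w \<in> parab {a..b} \<and> (\<forall>v \<in> parab {a..b}. len N v \<le> len N w)"
    then have perm: "w permutes {a..Suc b}"
      by (simp add: parab_permutes)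
    have "card (ordered_pairs a (Suc b)) \<le> card (inversions N w)"
      using w r len_r len_parab by metis
    then have "inversions N w = ordered_pairs a (Suc b)"
      using inversions_subset_ordered_pairs[OF perm] by (simp add: card_seteq)
    then have "(i, Suc i) \<in> inversions N w" if "a \<le> i" "i < Suc b" for i
      using that by (simp add: ordered_pairs_def)
    then have "w (Suc i) < w i" if "a \<le> i" "i < Suc b" for i
      using that by (simp add: inversions_def)
    then show "w = ?r"
      by (rule descending_permutes_interval_eq_reversal[OF perm])
  qed
qed

lemma reversal_1_eq: "reversal 1 N = reversal 1 (Suc (N - 1))"
  by (cases N) (auto simp: reversal_def fun_eq_iff)

lemma longest_I_eq: "longest N {1..N-1} = reversal 1 N"
  using longest_eq_reversal[of 1 "N - 1" N] reversal_1_eq[of N] by simp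

lemma longest_J_eq: "longest N {2..N} = reversal 2 (Suc N)"
  by (simp add: longest_eq_reversal)

lemma longest_T_eq: "longest N {1..N} = reversal 1 (Suc N)"
  by (simp add: longest_eq_reversal)

lemma reversal_1_in_parab: "reversal 1 N \<in> parab {1..N}"
proof -
  have "reversal 1 N \<in> parab {1..N - 1}"
    using reversal_in_parab[of 1 "N - 1"] reversal_1_eq[of N] by simp
  then show ?thesis
    using parab_mono[of "{1..N - 1}" "{1..N}"] by auto
qed

lemma conj_transpose:
  assumes "bij f"
  shows "f \<circ> transpose a b \<circ> inv f = transpose (f a) (f b)"
proof
  fix y
  have "transpose (f a) (f b) y = transpose (f a) (f b) (f (inv f y))"
    using assms by (simp add: bij_is_surj surj_f_inv_f)
  also have "\<dots> = f (transpose a b (inv f y))"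
    using assms by (simp add: transpose_apply_commute bij_is_inj)
  finally show "(f \<circ> transpose a b \<circ> inv f) y = transpose (f a) (f b) y"
    by simp
qed

lemma reversal_conj_sref:
  assumes "1 \<le> x" "x \<le> N"
  shows "reversal 1 (Suc N) \<circ> sref x \<circ> inv (reversal 1 (Suc N)) = sref (Suc N - x)"
proof -
  let ?R = "reversal 1 (Suc N)"
  have "?R \<circ> sref x \<circ> inv ?R = transpose (?R x) (?R (Suc x))"
    unfolding sref_def using reversal_permutes by (intro conj_transpose permutes_bij)
  moreover have "?R x = Suc (Suc N - x)" "?R (Suc x) = Suc N - x"
    using assms by (auto simp: reversal_def)
  ultimately show ?thesis
    by (simp add: sref_def transpose_commute)
qed

lemma hprod_empty [simp]: "hprod {} = id"
  by (simp add: hprod_def)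

lemma hprod_singleton [simp]: "hprod {i} = sref i"
  by (simp add: hprod_def)

lemma hprod_split:
  assumes "finite Y"
  shows "hprod Y = hprod {y \<in> Y. t \<le> y} \<circ> hprod {y \<in> Y. y < t}"
proof -
  let ?L = "{y \<in> Y. y < t}" and ?U = "{y \<in> Y. t \<le> y}"
  have "sorted_list_of_set ?L @ sorted_list_of_set ?U = sorted_list_of_set Y"
    using assms by (intro sorted_distinct_set_unique) (auto simp: sorted_append)
  then show ?thesis
    unfolding hprod_def by (metis rev_append word_prod_append)
qed

lemma hprod_permutes:
  assumes "finite Y" "Y \<subseteq> {a..<c}"
  shows "hprod Y permutes {a..c}"
proof (cases "Y = {}")
  case False
  then have "c = Suc (c - 1)"
    using assms(2) by fastforce
  moreover have "set (rev (sorted_list_of_set Y)) \<subseteq> {a..c - 1}"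
    using assms by fastforce
  ultimately show ?thesis
    unfolding hprod_def by (metis word_prod_permutes)
qed simp

lemma hprod_in_parab: "finite Y \<Longrightarrow> Y \<subseteq> K \<Longrightarrow> hprod Y \<in> parab K"
  unfolding hprod_def by (intro word_prod_in_parab) simp

lemma hprod_Suc_eq_iff:
  assumes "finite Y"
  shows "hprod Y (Suc i) = i \<longleftrightarrow> i \<in> Y"
proof -
  let ?U = "{y \<in> Y. i \<le> y}" and ?U' = "{y \<in> Y. Suc i \<le> y}"
  have "hprod {y \<in> Y. y < i} permutes {0..i}"
    using assms by (intro hprod_permutes) auto
  then have "hprod Y (Suc i) = hprod ?U (Suc i)"
    using hprod_split[OF assms, of i] by (simp add: permutes_not_in)
  also have "\<dots> = hprod ?U' (hprod {y \<in> ?U. y < Suc i} (Suc i))"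
  proof -
    have "{y \<in> ?U. Suc i \<le> y} = ?U'"
      by auto
    then show ?thesis
      using hprod_split[of ?U "Suc i"] assms by simp
  qed
  finally have split: "hprod Y (Suc i) = hprod ?U' (hprod {y \<in> ?U. y < Suc i} (Suc i))" .
  have U': "hprod ?U' permutes {Suc i..Suc (Max (insert i Y))}"
    using assms by (intro hprod_permutes) (auto simp: less_Suc_eq_le)
  show ?thesis
  proof (cases "i \<in> Y")
    case True
    then have "{y \<in> ?U. y < Suc i} = {i}"
      by auto
    then show ?thesis
      using split True permutes_not_in[OF U', of i] by (simp add: sref_apply)
  next
    case False
    then have "{y \<in> ?U. y < Suc i} = {}"
      using le_antisym less_Suc_eq_le by blast
    then have "hprod Y (Suc i) = hprod ?U' (Suc i)"
      using split by (simp only: hprod_empty id_apply)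
    moreover have "hprod ?U' (Suc i) \<in> {Suc i..Suc (Max (insert i Y))}"
      using permutes_in_image[OF U'] assms by auto
    ultimately show ?thesis
      using False by auto
  qed
qed

lemma inj_on_hprod: "inj_on hprod {Y. finite Y}"
proof (rule inj_onI)
  fix Y Y'
  assume "Y \<in> {Y. finite Y}" "Y' \<in> {Y. finite Y}" "hprod Y = hprod Y'"
  then show "Y = Y'"
    using hprod_Suc_eq_iff by (metis mem_Collect_eq subsetI subset_antisym)
qed

lemma hprod_atLeastAtMost_Suc:
  assumes "a \<le> Suc b"
  shows "hprod {a..Suc b} = sref (Suc b) \<circ> hprod {a..b}"
proof -
  have "{y \<in> {a..Suc b}. Suc b \<le> y} = {Suc b}" "{y \<in> {a..Suc b}. y < Suc b} = {a..b}"
    using assms by auto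
  then show ?thesis
    using hprod_split[of "{a..Suc b}" "Suc b"] by simp
qed

lemma hprod_atLeastAtMost_apply:
  "hprod {a..b} k = (if a \<le> k \<and> k \<le> Suc b then if k = a then Suc b else k - 1 else k)"
proof (induction b arbitrary: k)
  case 0
  then show ?case
    by (cases a) (auto simp: sref_apply)
next
  case (Suc b)
  then show ?case
    by (cases "a \<le> Suc b") (auto simp: hprod_atLeastAtMost_Suc sref_apply)
qed

lemma hprod_atLeastAtMost_eq_Cons:
  assumes "a \<le> b"
  shows "hprod {a..b} = hprod {Suc a..b} \<circ> sref a"
proof -
  have "{y \<in> {a..b}. Suc a \<le> y} = {Suc a..b}" "{y \<in> {a..b}. y < Suc a} = {a}"
    using assms by auto
  then show ?thesis
    using hprod_split[of "{a..b}" "Suc a"] by simp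
qed

text \<open>Right multiplication by \<open>h\<^bsub>{a..b}\<^esub> = s\<^sub>b \<cdots> s\<^sub>a\<close> moves the value \<open>u (Suc b)\<close>
  down to position \<open>a\<close>, past \<open>Suc b - a\<close> smaller values.\<close>
lemma ninversions_comp_hprod_atLeastAtMost:
  assumes "b \<le> N" "\<And>k. a \<le> k \<Longrightarrow> k \<le> b \<Longrightarrow> u k < u (Suc b)"
  shows "ninversions N (u \<circ> hprod {a..b}) = ninversions N u + (Suc b - a)"
  using assms(2)
proof (induction "Suc b - a" arbitrary: a)
  case 0
  then show ?case
    by simp
next
  case (Suc m)
  then have a: "a \<le> b"
    by simp
  let ?v = "u \<circ> hprod {Suc a..b}"
  have "?v a < ?v (Suc a)"
    using Suc.prems[of a] a by (simp add: hprod_atLeastAtMost_apply)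
  then have "ninversions N (?v \<circ> sref a) = Suc (ninversions N ?v)"
    using a assms(1) by (intro ninversions_comp_sref_ascent) simp_all
  moreover have "ninversions N ?v = ninversions N u + (Suc b - Suc a)"
    using Suc.hyps(2) by (intro Suc.hyps(1)) (simp_all add: Suc.prems)
  ultimately show ?case
    using a Suc.hyps(2) by (simp add: hprod_atLeastAtMost_eq_Cons comp_assoc)
qed

lemma inv_hprod_atLeastAtMost_apply:
  "inv (hprod {a..b}) k = (if a \<le> k \<and> k \<le> Suc b then if k = Suc b then a else Suc k else k)"
  by (rule fun_cong[of _ _ k], rule inv_equality) (auto simp: hprod_atLeastAtMost_apply)

section \<open>The case \<open>J \<subseteq> X\<close>\<close>

lemma reversal_1_comp_hprod_atLeast:
  assumes "1 \<le> a" "a \<le> 2"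
  shows "reversal 1 N \<circ> hprod {a..N} = hprod {1..Suc N - a} \<circ> reversal 2 (Suc N)"
proof
  fix k
  have "a = 1 \<or> a = 2"
    using assms by auto
  then show "(reversal 1 N \<circ> hprod {a..N}) k = (hprod {1..Suc N - a} \<circ> reversal 2 (Suc N)) k"
    by (elim disjE; cases "k = 0"; cases "k = 1"; cases "k = 2"; cases "k \<le> N"; cases "k = Suc N")
      (auto simp: reversal_def hprod_atLeastAtMost_apply sref_apply)
qed

lemma descents_reversal_1_comp_hprod_atLeast:
  assumes "1 \<le> a" "a \<le> 2"
  shows "{i \<in> {1..N}. (reversal 1 N \<circ> hprod {a..N}) (Suc i) < (reversal 1 N \<circ> hprod {a..N}) i}
    = {a..N}"
proof (rule set_eqI)
  fix i
  have "a = 1 \<or> a = 2"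
    using assms by auto
  then show "i \<in> {i \<in> {1..N}. (reversal 1 N \<circ> hprod {a..N}) (Suc i) < (reversal 1 N \<circ> hprod {a..N}) i}
    \<longleftrightarrow> i \<in> {a..N}"
    by (elim disjE; cases "i = 1"; cases "i < N"; cases "i = N")
      (auto simp: reversal_def hprod_atLeastAtMost_apply sref_apply)
qed

lemma descents_inv_reversal_1_comp_hprod_atLeast:
  assumes "1 \<le> a" "a \<le> 2"
  shows "{i \<in> {1..N}. (inv (hprod {a..N}) \<circ> reversal 1 N) (Suc i) < (inv (hprod {a..N}) \<circ> reversal 1 N) i}
    = {1..Suc N - a}"
proof (rule set_eqI)
  fix i
  have "a = 1 \<or> a = 2"
    using assms by auto
  then show "i \<in> {i \<in> {1..N}. (inv (hprod {a..N}) \<circ> reversal 1 N) (Suc i) < (inv (hprod {a..N}) \<circ> reversal 1 N) i}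
    \<longleftrightarrow> i \<in> {1..Suc N - a}"
    by (elim disjE; cases "i = 1"; cases "i < N"; cases "i = N")
      (auto simp: reversal_def inv_hprod_atLeastAtMost_apply sref_apply)
qed

lemma conj_longest_eq_image:
  assumes "X \<subseteq> {1..N}"
  shows "conj_longest N X = (\<lambda>x. Suc N - x) ` X"
proof -
  have "longest N {1..N} \<circ> sref x \<circ> inv (longest N {1..N}) = sref (Suc N - x)" if "x \<in> X" for x
    unfolding longest_T_eq using that assms by (intro reversal_conj_sref) auto
  then show ?thesis
    unfolding conj_longest_def using assms by (auto simp: subset_iff image_iff)
qed

lemma largest_gap_not_in_rdes:
  assumes "X \<subseteq> {1..N}" "j \<in> {2..N}" "j \<notin> X" "{Suc j..N} \<subseteq> X"
  shows "j \<notin> rdes N (reversal 1 N \<circ> hprod X)"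
proof -
  have fin: "finite X"
    using assms(1) finite_subset by blast
  have "{y \<in> X. j \<le> y} = {Suc j..N}"
  proof
    show "{y \<in> X. j \<le> y} \<subseteq> {Suc j..N}"
    proof clarify
      fix y
      assume "y \<in> X" "j \<le> y"
      moreover from this have "y \<noteq> j" "y \<le> N"
        using assms(1,3) by auto
      ultimately show "y \<in> {Suc j..N}"
        by simp
    qed
    show "{Suc j..N} \<subseteq> {y \<in> X. j \<le> y}"
      using assms(4) by force
  qed
  then have split: "hprod X = hprod {Suc j..N} \<circ> hprod {y \<in> X. y < j}"
    using hprod_split[OF fin, of j] by simp
  have low: "hprod {y \<in> X. y < j} permutes {1..j}"
    using assms(1) fin by (intro hprod_permutes) force+
  have "hprod {y \<in> X. y < j} (Suc j) = Suc j"
    by (simp add: permutes_not_in[OF low])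
  moreover have "hprod {y \<in> X. y < j} j \<in> {1..j}"
    unfolding permutes_in_image[OF low] using assms(2) by simp
  ultimately have "hprod X (Suc j) = Suc N" "hprod X j \<in> {1..j}"
    using split assms(2) by (simp_all add: hprod_atLeastAtMost_apply)
  then have "(reversal 1 N \<circ> hprod X) j < (reversal 1 N \<circ> hprod X) (Suc j)"
    using assms(2) by (simp add: reversal_def)
  moreover have "reversal 1 N \<circ> hprod X \<in> parab {1..N}"
    using assms(1) fin by (intro parab_comp reversal_1_in_parab hprod_in_parab)
  ultimately show ?thesis
    by (simp add: rdes_eq)
qed

lemma atLeast2_subset_of_subset_rdes:
  assumes "X \<subseteq> {1..N}" "{2..N} \<subseteq> rdes N (reversal 1 N \<circ> hprod X)"
  shows "{2..N} \<subseteq> X"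
proof (rule ccontr)
  assume "\<not> {2..N} \<subseteq> X"
  then have "{2..N} - X \<noteq> {}"
    by blast
  define j where "j = Max ({2..N} - X)"
  have j: "j \<in> {2..N} - X"
    unfolding j_def using \<open>{2..N} - X \<noteq> {}\<close> by (intro Max_in) auto
  moreover have "{Suc j..N} \<subseteq> X"
  proof
    fix y
    assume y: "y \<in> {Suc j..N}"
    show "y \<in> X"
    proof (rule ccontr)
      assume "y \<notin> X"
      then have "y \<le> j"
        using y j unfolding j_def by (intro Max_ge) auto
      then show False
        using y by simp
    qed
  qed
  ultimately show False
    using largest_gap_not_in_rdes[OF assms(1)] assms(2) by blast
qed

lemma len_reversal_1_comp_hprod_atLeast:
  assumes "1 \<le> a"
  shows "len N (reversal 1 N \<circ> hprod {a..N}) = len N (reversal 1 N) + len N (hprod {a..N})"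
proof -
  have h: "hprod {a..N} \<in> parab {1..N}"
    using assms by (intro hprod_in_parab) auto
  have "ninversions N (reversal 1 N \<circ> hprod {a..N}) = ninversions N (reversal 1 N) + (Suc N - a)"
    by (rule ninversions_comp_hprod_atLeastAtMost) (simp_all add: reversal_def)
  moreover have "ninversions N (id \<circ> hprod {a..N}) = ninversions N id + (Suc N - a)"
    by (rule ninversions_comp_hprod_atLeastAtMost) simp_all
  ultimately show ?thesis
    using len_eq_ninversions[OF h] len_eq_ninversions[OF reversal_1_in_parab]
      len_eq_ninversions[OF parab_comp[OF reversal_1_in_parab h]]
    by simp
qed

lemma atLeast2_subset_cases:
  fixes N :: nat and X :: "nat set"
  assumes "{2..N} \<subseteq> X" "X \<subseteq> {1..N}"
  obtains a where "1 \<le> a" "a \<le> 2" "X = {a..N}"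
proof (cases "1 \<in> X")
  case True
  have "{1..N} \<subseteq> X"
  proof
    fix k
    assume "k \<in> {1..N}"
    then have "k = 1 \<or> k \<in> {2..N}"
      by auto
    then show "k \<in> X"
      using True assms(1) by blast
  qed
  then show ?thesis
    using that[of 1] assms(2) by simp
next
  case False
  have "X \<subseteq> {2..N}"
  proof
    fix k
    assume "k \<in> X"
    then have "k \<in> {1..N}" "k \<noteq> 1"
      using False assms(2) by auto
    then show "k \<in> {2..N}"
      by simp
  qed
  then show ?thesis
    using that[of 2] assms(1) by simp
qed

lemma image_Suc_diff_atLeastAtMost:
  assumes "1 \<le> a"
  shows "(\<lambda>x. Suc N - x) ` {a..N} = {1..Suc N - a}"
proof
  show "{1..Suc N - a} \<subseteq> (\<lambda>x. Suc N - x) ` {a..N}"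
  proof
    fix y
    assume "y \<in> {1..Suc N - a}"
    then have "Suc N - y \<in> {a..N}" "y = Suc N - (Suc N - y)"
      by auto
    then show "y \<in> (\<lambda>x. Suc N - x) ` {a..N}"
      by (rule rev_image_eqI)
  qed
qed (use assms in auto)

lemma longest_I_comp_hprod_atLeast:
  fixes N a :: nat
  assumes "1 \<le> a" "a \<le> 2"
  defines "w \<equiv> longest N {1..N-1} \<circ> hprod {a..N}"
  shows "len N w = len N (longest N {1..N-1}) + len N (hprod {a..N})"
    and "\<exists>!Y. Y \<subseteq> {1..N} \<and> w = hprod Y \<circ> longest N {2..N}"
    and "\<forall>Y. Y \<subseteq> {1..N} \<and> w = hprod Y \<circ> longest N {2..N}
           \<longrightarrow> Y = conj_longest N {a..N} \<and> ldes N (hprod Y \<circ> longest N {2..N}) = Y"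
    and "rdes N w = {a..N}"
proof -
  let ?Y = "{1..Suc N - a}"
  have w_eq: "w = hprod ?Y \<circ> longest N {2..N}"
    unfolding w_def longest_I_eq longest_J_eq by (rule reversal_1_comp_hprod_atLeast[OF assms(1,2)])
  have h: "hprod {a..N} \<in> parab {1..N}"
    using assms(1) by (intro hprod_in_parab) auto
  then have w_parab: "w \<in> parab {1..N}"
    unfolding w_def longest_I_eq by (intro parab_comp reversal_1_in_parab)
  have unique: "Y = ?Y" if "Y \<subseteq> {1..N}" "w = hprod Y \<circ> longest N {2..N}" for Y
  proof -
    have "hprod Y = hprod Y \<circ> reversal 2 (Suc N) \<circ> reversal 2 (Suc N)"
      by (simp add: comp_assoc)
    also have "\<dots> = hprod ?Y \<circ> reversal 2 (Suc N) \<circ> reversal 2 (Suc N)"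
      using that(2) w_eq by (simp add: longest_J_eq)
    also have "\<dots> = hprod ?Y"
      by (simp add: comp_assoc)
    finally have "hprod Y = hprod ?Y" .
    moreover have "finite Y"
      using that(1) finite_subset by blast
    ultimately show ?thesis
      using inj_on_hprod by (auto dest: inj_onD)
  qed
  have "inv w = inv (hprod {a..N}) \<circ> reversal 1 N"
    unfolding w_def longest_I_eq
    using bij_of_parab[OF h] bij_of_parab[OF reversal_1_in_parab] by (simp add: o_inv_distrib)
  then have ldes: "ldes N w = ?Y"
    unfolding ldes_eq_rdes_inv[OF w_parab] rdes_eq[OF parab_inv[OF w_parab]]
    by (simp only: descents_inv_reversal_1_comp_hprod_atLeast[OF assms(1,2)])
  show "len N w = len N (longest N {1..N-1}) + len N (hprod {a..N})"
    unfolding w_def longest_I_eq using assms(1) by (rule len_reversal_1_comp_hprod_atLeast)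
  show "\<exists>!Y. Y \<subseteq> {1..N} \<and> w = hprod Y \<circ> longest N {2..N}"
    using w_eq unique assms(1) by (intro ex1I[of _ ?Y]) auto
  show "\<forall>Y. Y \<subseteq> {1..N} \<and> w = hprod Y \<circ> longest N {2..N}
           \<longrightarrow> Y = conj_longest N {a..N} \<and> ldes N (hprod Y \<circ> longest N {2..N}) = Y"
    using unique ldes conj_longest_eq_image[of "{a..N}" N] image_Suc_diff_atLeastAtMost[OF assms(1)]
      assms(1) by auto
  show "rdes N w = {a..N}"
    unfolding rdes_eq[OF w_parab] unfolding w_def longest_I_eq
    by (rule descents_reversal_1_comp_hprod_atLeast[OF assms(1,2)])
qed

theorem lemma10p5:
  fixes N :: nat and X :: "nat set"
  assumes "X \<subseteq> {1..N}"
  shows "({2..N} \<subseteq> X \<longleftrightarrow> {2..N} \<subseteq> rdes N (longest N {1..N-1} \<circ> hprod X))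
    \<and> ({2..N} \<subseteq> X \<longrightarrow>
        len N (longest N {1..N-1} \<circ> hprod X) = len N (longest N {1..N-1}) + len N (hprod X)
      \<and> (\<exists>!Y. Y \<subseteq> {1..N} \<and> longest N {1..N-1} \<circ> hprod X = hprod Y \<circ> longest N {2..N})
      \<and> (\<forall>Y. Y \<subseteq> {1..N} \<and> longest N {1..N-1} \<circ> hprod X = hprod Y \<circ> longest N {2..N}
            \<longrightarrow> Y = conj_longest N X \<and> ldes N (hprod Y \<circ> longest N {2..N}) = Y)
      \<and> rdes N (longest N {1..N-1} \<circ> hprod X) = X)"
proof (cases "{2..N} \<subseteq> X")
  case True
  then obtain a where "1 \<le> a" "a \<le> 2" "X = {a..N}"
    using atLeast2_subset_cases assms by blast
  then show ?thesis
    using True longest_I_comp_hprod_atLeast[of a N] by simp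
next
  case False
  then show ?thesis
    using atLeast2_subset_of_subset_rdes[OF assms] unfolding longest_I_eq by blast
qed

end
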